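(* Let $K, L, \Gamma, \Delta, P, \Lambda$ be positive integers with $\Gamma \le L$, $\Delta \le K$, $\Lambda \le P$, $\Delta \mid K$ and $\Lambda \mid P$. Let $\bar{\mathcal{F}} \in \mathbb{R}^{K \times P \times \cdots \times P}$ (with $L$ modes of size $P$ after the first) be any demand tensor, $\bar{\mathcal{F}}(k,\underline{\mathbf{p}}) = c_{k,\underline{\mathbf{p}}}$, whose entries vanish at every index $(k,\underline{\mathbf{p}})$ for which more than $\Gamma$ coordinates of $\underline{\mathbf{p}}=(p_1,\dots,p_L)\in[P]^L$ are active (differ from $1$). Then there exist an integer $$N \le \frac{K}{\Delta}\binom{L}{\Gamma}\min\big(\Delta,\Lambda^{\Gamma}\big)\Big(\frac{P}{\Lambda}\Big)^{\Gamma},$$ a decoding matrix $\mathbf{D}\in\mathbb{R}^{K\times N}$ and an encoding tensor $\bar{\mathcal{E}}\in\mathbb{R}^{N\times P\times\cdots\times P}$ such that $\bar{\mathcal{F}} = \bar{\mathcal{E}}\times_1 \mathbf{D}$ (lossless recovery of all $K$ demands) and, for every $n\in[N]$: (i) the column $\mathbf{D}(:,n)$ has at most $\Delta$ nonzero entries; (ii) there is a set $\mathcal{S}_n\subseteq[L]$ with $|\mathcal{S}_n|\le\Gamma$ such that $\bar{\mathcal{E}}(n,\underline{\mathbf{p}})\neq 0$ only if all coordinates $p_\ell$ with $\ell\notin\mathcal{S}_n$ are inactive (equal to $1$); (iii) for each $\ell\in\mathcal{S}_n$, writing $\mathcal{P}_n=\{\underline{\mathbf{p}}:\bar{\mathcal{E}}(n,\underline{\mathbf{p}})\neq0\}$,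 one has $\max_{\underline{\mathbf{p}}\in\mathcal{P}_n}p_\ell-\min_{\underline{\mathbf{p}}\in\mathcal{P}_n}p_\ell+1\le\Lambda$. Consequently the system rate $R=K/N$ is achievable.
   Context: Distributed computing setting: $K$ users, $N$ servers, $L$ real basis subfunctions with outputs $W_1,\dots,W_L$. User $k$ requests $F_k=\sum_{\underline{\mathbf{p}}\in[P]^L} c_{k,\underline{\mathbf{p}}}\prod_{\ell\in[L]}W_\ell^{p_\ell}$; the coefficients form the order-$(L+1)$ tensor $\bar{\mathcal{F}}$. Server $n$ computes the subfunctions in $\mathcal{S}_n$ and the monomials indexed by $\mathcal{P}_n$, transmits $z_n=\sum_{\underline{\mathbf{p}}\in\mathcal{P}_n}e_{n,\underline{\mathbf{p}}}\prod_\ell W_\ell^{p_\ell}$ (with $\bar{\mathcal{E}}(n,\underline{\mathbf{p}})=e_{n,\underline{\mathbf{p}}}$) to at most $\Delta$ users, and user $k$ forms $F'_k=\sum_n d_{k,n}z_n$ with $\mathbf{D}=(d_{k,n})$; error-free recovery for all demands is equivalent to $\bar{\mathcal{F}}=\bar{\mathcal{E}}\times_1\mathbf{D}$. Constraints: computation cost $\Gamma$ (number of subfunctions per server), communication cost $\Delta$ (users per server), multiplication cost $\Lambda$ (range of exponents of each computed subfunction per server). The mode-1 product $\bar{\mathcal{E}}\times_1\mathbf{D}$ is defined by unfolding $\bar{\mathcal{E}}$ along mode 1 into $\bar{\mathcal{E}}_{(1)}\in\mathbb{R}^{N\times P^L}$, computing $\mathbf{D}\bar{\mathcal{E}}_{(1)}$,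 and folding back to a $K\times P\times\cdots\times P$ tensor; equivalently $(\bar{\mathcal{E}}\times_1\mathbf{D})(k,\underline{\mathbf{p}})=\sum_n d_{k,n}\bar{\mathcal{E}}(n,\underline{\mathbf{p}})$. The system rate is $R=K/N$. *)

theory Defs
  imports Complex_Main
begin

text \<open>Exponent tuples \<open>p = (p_1,...,p_L) \<in> [P]^L\<close> are lists of length L with entries in {1..P};
  coordinate \<open>\<ell>\<close> (0-based position in the list) is inactive iff it equals 1.\<close>

definition exp_tuples :: "nat \<Rightarrow> nat \<Rightarrow> nat list set" where
  "exp_tuples L P = {p. length p = L \<and> set p \<subseteq> {1..P}}"

definition active_coords :: "nat list \<Rightarrow> nat set" where
  "active_coords p = {l. l < length p \<and> p ! l \<noteq> 1}"

definition mode1_product :: "nat \<Rightarrow> (nat \<Rightarrow> nat list \<Rightarrow> real) \<Rightarrow> (nat \<Rightarrow> nat \<Rightarrow> real)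
    \<Rightarrow> nat \<Rightarrow> nat list \<Rightarrow> real" where
  "mode1_product N E D k p = (\<Sum>n<N. D k n * E n p)"

definition support_row :: "nat \<Rightarrow> nat \<Rightarrow> (nat \<Rightarrow> nat list \<Rightarrow> real) \<Rightarrow> nat \<Rightarrow> nat list set" where
  "support_row L P E n = {p \<in> exp_tuples L P. E n p \<noteq> 0}"

end

theory Submission
  imports Defs "HOL-Library.FuncSet"
begin

text \<open>A demanded monomial has at most \<open>\<Gamma>\<close> active coordinates, so it lies in one of
  \<open>(L choose \<Gamma>) * (P/\<Lambda>)^\<Gamma>\<close> cells: choose a \<open>\<Gamma>\<close>-set \<open>S\<close> of coordinates containing its active
  ones and, for each \<open>l \<in> S\<close>, the block of \<open>\<Lambda>\<close> consecutive exponents containing \<open>p_l\<close>. Any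
  row of the encoding tensor supported in one cell meets the computation and multiplication
  constraints. If \<open>\<Delta> \<le> \<Lambda>^\<Gamma>\<close>, take one server per (user, cell) that sends the user's demand
  restricted to the cell: \<open>K * (L choose \<Gamma>) * (P/\<Lambda>)^\<Gamma>\<close> servers. Otherwise split the users into
  \<open>K/\<Delta>\<close> groups of \<open>\<Delta>\<close> and take one server per (group, sparse monomial) that sends the bare
  monomial, which each user of the group scales by its own coefficient; there are at most
  \<open>(L choose \<Gamma>) * P^\<Gamma>\<close> sparse monomials. In both schemes every (user, monomial) pair is served
  by exactly one server.\<close>

definition sparse_tuples :: "nat \<Rightarrow> nat \<Rightarrow> nat \<Rightarrow> nat list set" where
  "sparse_tuples L P \<Gamma> = {p \<in> exp_tuples L P. card (active_coords p) \<le> \<Gamma>}"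

text \<open>The active coordinates are padded to exactly \<open>\<Gamma>\<close> so that cells are indexed by
  \<open>\<Gamma>\<close>-subsets of \<open>{..<L}\<close>; on tuples with more than \<open>\<Gamma>\<close> active coordinates the choice is junk.\<close>

definition cover_set :: "nat \<Rightarrow> nat \<Rightarrow> nat list \<Rightarrow> nat set" where
  "cover_set L \<Gamma> p = (SOME S. active_coords p \<subseteq> S \<and> S \<subseteq> {..<L} \<and> card S = \<Gamma>)"

definition cell_key :: "nat \<Rightarrow> nat \<Rightarrow> nat \<Rightarrow> nat list \<Rightarrow> nat set \<times> (nat \<Rightarrow> nat)" where
  "cell_key L \<Gamma> \<Lambda> p = (cover_set L \<Gamma> p, restrict (\<lambda>l. (p ! l - 1) div \<Lambda>) (cover_set L \<Gamma> p))"

definition cell_keys :: "nat \<Rightarrow> nat \<Rightarrow> nat \<Rightarrow> (nat set \<times> (nat \<Rightarrow> nat)) set" where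
  "cell_keys L \<Gamma> m = (SIGMA S:{S. S \<subseteq> {..<L} \<and> card S = \<Gamma>}. S \<rightarrow>\<^sub>E {..<m})"

definition tuple_box :: "nat \<Rightarrow> nat set \<Rightarrow> (nat \<Rightarrow> nat) \<Rightarrow> nat \<Rightarrow> nat list set" where
  "tuple_box L S c w =
     {p. \<forall>l<L. (l \<notin> S \<longrightarrow> p ! l = 1) \<and> (l \<in> S \<longrightarrow> c l < p ! l \<and> p ! l \<le> c l + w)}"

lemma finite_exp_tuples: "finite (exp_tuples L P)"
  using finite_lists_length_eq[of "{1..P}" L] unfolding exp_tuples_def by (simp add: conj_commute)

lemma exp_tuples_nth: "p \<in> exp_tuples L P \<Longrightarrow> l < L \<Longrightarrow> p ! l \<in> {1..P}"
  unfolding exp_tuples_def by (auto dest: nth_mem)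

lemma finite_sparse_tuples: "finite (sparse_tuples L P \<Gamma>)"
  unfolding sparse_tuples_def using finite_exp_tuples by simp

lemma cover_set_spec:
  assumes "p \<in> sparse_tuples L P \<Gamma>" "\<Gamma> \<le> L"
  shows "active_coords p \<subseteq> cover_set L \<Gamma> p" "cover_set L \<Gamma> p \<subseteq> {..<L}"
    "card (cover_set L \<Gamma> p) = \<Gamma>"
proof -
  have "active_coords p \<subseteq> {..<L}"
    using assms(1) by (auto simp: sparse_tuples_def exp_tuples_def active_coords_def)
  then have "\<exists>S. active_coords p \<subseteq> S \<and> S \<subseteq> {..<L} \<and> card S = \<Gamma>"
    using assms by (intro exists_subset_between) (auto simp: sparse_tuples_def)
  from someI_ex[OF this] show "active_coords p \<subseteq> cover_set L \<Gamma> p" "cover_set L \<Gamma> p \<subseteq> {..<L}"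
    "card (cover_set L \<Gamma> p) = \<Gamma>"
    unfolding cover_set_def by blast+
qed

lemma sparse_tuple_in_cell_box:
  assumes p: "p \<in> sparse_tuples L P \<Gamma>" and "\<Gamma> \<le> L" "0 < \<Lambda>"
    and key: "cell_key L \<Gamma> \<Lambda> p = (S, b)"
  shows "p \<in> tuple_box L S (\<lambda>l. b l * \<Lambda>) \<Lambda>"
  unfolding tuple_box_def
proof (intro CollectI allI impI conjI)
  fix l assume l: "l < L"
  have S: "S = cover_set L \<Gamma> p" using key by (simp add: cell_key_def)
  show "p ! l = 1" if "l \<notin> S"
    using cover_set_spec(1)[OF assms(1,2)] l that p
    by (auto simp: S active_coords_def sparse_tuples_def exp_tuples_def)
  assume "l \<in> S"
  then have bl: "b l = (p ! l - 1) div \<Lambda>" using key by (auto simp: cell_key_def)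
  have "1 \<le> p ! l" using exp_tuples_nth l p by (auto simp: sparse_tuples_def)
  then show "b l * \<Lambda> < p ! l" "p ! l \<le> b l * \<Lambda> + \<Lambda>"
    using div_times_less_eq_dividend[of "p ! l - 1" \<Lambda>]
      dividend_less_div_times[OF \<open>0 < \<Lambda>\<close>, of "p ! l - 1"]
    unfolding bl by linarith+
qed

lemma cell_key_in_cell_keys:
  assumes p: "p \<in> sparse_tuples L P \<Gamma>" and "\<Gamma> \<le> L" "0 < \<Lambda>" "\<Lambda> dvd P"
  shows "cell_key L \<Gamma> \<Lambda> p \<in> cell_keys L \<Gamma> (P div \<Lambda>)"
proof -
  have "(p ! l - 1) div \<Lambda> < P div \<Lambda>" if "l \<in> cover_set L \<Gamma> p" for l
  proof (rule less_mult_imp_div_less)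
    have "p ! l \<in> {1..P}"
      using exp_tuples_nth cover_set_spec(2)[OF assms(1,2)] that p by (auto simp: sparse_tuples_def)
    then show "p ! l - 1 < P div \<Lambda> * \<Lambda>" using \<open>\<Lambda> dvd P\<close> by (simp; arith)
  qed
  then show ?thesis using cover_set_spec(2,3)[OF assms(1,2)] by (auto simp: cell_key_def cell_keys_def)
qed

lemma finite_cell_keys: "finite (cell_keys L \<Gamma> m)"
  unfolding cell_keys_def
  by (intro finite_SigmaI finite_PiE) (auto dest: finite_subset[OF _ finite_lessThan])

lemma card_cell_keys: "card (cell_keys L \<Gamma> m) = (L choose \<Gamma>) * m ^ \<Gamma>"
proof -
  let ?Subs = "{S. S \<subseteq> {..<L} \<and> card S = \<Gamma>}"
  have fin: "finite ?Subs" by (rule finite_subset[of _ "Pow {..<L}"]) auto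
  have "card (cell_keys L \<Gamma> m) = (\<Sum>S\<in>?Subs. card (S \<rightarrow>\<^sub>E {..<m}))"
    unfolding cell_keys_def using fin
    by (intro card_SigmaI) (auto intro!: finite_PiE dest: finite_subset[OF _ finite_lessThan])
  also have "\<dots> = (\<Sum>S\<in>?Subs. m ^ \<Gamma>)"
    by (intro sum.cong refl) (auto simp: card_PiE dest: finite_subset[OF _ finite_lessThan])
  also have "\<dots> = (L choose \<Gamma>) * m ^ \<Gamma>" using n_subsets[of "{..<L}" \<Gamma>] by simp
  finally show ?thesis .
qed

lemma inj_on_cell_key_unit: "\<Gamma> \<le> L \<Longrightarrow> inj_on (cell_key L \<Gamma> 1) (sparse_tuples L P \<Gamma>)"
proof (rule inj_onI)
  fix p q assume "\<Gamma> \<le> L" and p: "p \<in> sparse_tuples L P \<Gamma>" and q: "q \<in> sparse_tuples L P \<Gamma>"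
    and eq: "cell_key L \<Gamma> 1 p = cell_key L \<Gamma> 1 q"
  define S where "S = cover_set L \<Gamma> p"
  have Sq: "S = cover_set L \<Gamma> q" using eq by (simp add: S_def cell_key_def)
  show "p = q"
  proof (rule nth_equalityI)
    show "length p = length q" using p q by (simp add: sparse_tuples_def exp_tuples_def)
    fix l assume "l < length p"
    then have l: "l < L" using p by (simp add: sparse_tuples_def exp_tuples_def)
    show "p ! l = q ! l"
    proof (cases "l \<in> S")
      case True
      from eq have "snd (cell_key L \<Gamma> 1 p) l = snd (cell_key L \<Gamma> 1 q) l" by simp
      then have "p ! l - 1 = q ! l - 1" using True Sq by (simp add: cell_key_def S_def)
      moreover have "p ! l \<in> {1..P}" "q ! l \<in> {1..P}"
        using exp_tuples_nth l p q by (auto simp: sparse_tuples_def)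
      ultimately show ?thesis by auto
    next
      case False
      then have "l \<notin> active_coords p" "l \<notin> active_coords q"
        using cover_set_spec(1)[OF p \<open>\<Gamma> \<le> L\<close>] cover_set_spec(1)[OF q \<open>\<Gamma> \<le> L\<close>] Sq S_def by auto
      then show ?thesis using l p q by (simp add: active_coords_def sparse_tuples_def exp_tuples_def)
    qed
  qed
qed

lemma card_sparse_tuples_le:
  assumes "\<Gamma> \<le> L"
  shows "card (sparse_tuples L P \<Gamma>) \<le> (L choose \<Gamma>) * P ^ \<Gamma>"
proof -
  have "cell_key L \<Gamma> 1 ` sparse_tuples L P \<Gamma> \<subseteq> cell_keys L \<Gamma> P"
    using cell_key_in_cell_keys[OF _ assms, of _ P 1] by auto
  then have "card (sparse_tuples L P \<Gamma>) \<le> card (cell_keys L \<Gamma> P)"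
    using card_inj_on_le[OF inj_on_cell_key_unit[OF assms]] finite_cell_keys by blast
  then show ?thesis by (simp add: card_cell_keys)
qed

definition row_admissible :: "nat \<Rightarrow> nat \<Rightarrow> nat \<Rightarrow> nat \<Rightarrow> (nat list \<Rightarrow> real) \<Rightarrow> bool" where
  "row_admissible L P \<Gamma> \<Lambda> e \<longleftrightarrow>
     (\<exists>S \<subseteq> {..<L}. card S \<le> \<Gamma>
        \<and> (\<forall>p\<in>exp_tuples L P. e p \<noteq> 0 \<longrightarrow> (\<forall>l<L. l \<notin> S \<longrightarrow> p ! l = 1))
        \<and> (\<forall>l\<in>S. {p \<in> exp_tuples L P. e p \<noteq> 0} \<noteq> {} \<longrightarrow>
              Max ((\<lambda>p. p ! l) ` {p \<in> exp_tuples L P. e p \<noteq> 0})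
              - Min ((\<lambda>p. p ! l) ` {p \<in> exp_tuples L P. e p \<noteq> 0}) + 1 \<le> \<Lambda>))"

definition server_admissible ::
    "nat \<Rightarrow> nat \<Rightarrow> nat \<Rightarrow> nat \<Rightarrow> nat \<Rightarrow> nat \<Rightarrow> (nat \<Rightarrow> real) \<Rightarrow> (nat list \<Rightarrow> real) \<Rightarrow> bool" where
  "server_admissible K L P \<Gamma> \<Delta> \<Lambda> d e \<longleftrightarrow>
     card {k. k < K \<and> d k \<noteq> 0} \<le> \<Delta> \<and> row_admissible L P \<Gamma> \<Lambda> e"

definition admissible_encoding ::
    "nat \<Rightarrow> nat \<Rightarrow> nat \<Rightarrow> nat \<Rightarrow> nat \<Rightarrow> nat \<Rightarrow> (nat \<Rightarrow> nat list \<Rightarrow> real) \<Rightarrow> nat \<Rightarrow> bool" where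
  "admissible_encoding K L P \<Gamma> \<Delta> \<Lambda> F N \<longleftrightarrow>
     (\<exists>D E. (\<forall>k<K. \<forall>p\<in>exp_tuples L P. F k p = mode1_product N E D k p)
        \<and> (\<forall>n<N. server_admissible K L P \<Gamma> \<Delta> \<Lambda> (\<lambda>k. D k n) (E n)))"

lemma Max_minus_Min_le_width:
  fixes A :: "nat set"
  assumes "finite A" "A \<noteq> {}" "\<forall>a\<in>A. c < a \<and> a \<le> c + w"
  shows "Max A - Min A + 1 \<le> w"
proof -
  have "Max A \<in> A" "Min A \<in> A" using assms(1,2) by simp_all
  then have "c < Min A" "Max A \<le> c + w" "Min A \<le> Max A" using assms by auto
  then show ?thesis by arith
qed

lemma row_admissible_if_support_in_box:
  assumes "S \<subseteq> {..<L}" "card S \<le> \<Gamma>"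
    and box: "\<forall>p\<in>exp_tuples L P. e p \<noteq> 0 \<longrightarrow> p \<in> tuple_box L S c \<Lambda>"
  shows "row_admissible L P \<Gamma> \<Lambda> e"
proof -
  let ?supp = "{p \<in> exp_tuples L P. e p \<noteq> 0}"
  have "Max ((\<lambda>p. p ! l) ` ?supp) - Min ((\<lambda>p. p ! l) ` ?supp) + 1 \<le> \<Lambda>"
    if "l \<in> S" "?supp \<noteq> {}" for l
  proof (rule Max_minus_Min_le_width[where c = "c l"])
    show "finite ((\<lambda>p. p ! l) ` ?supp)" using finite_exp_tuples by simp
    show "(\<lambda>p. p ! l) ` ?supp \<noteq> {}" using that(2) by simp
    show "\<forall>a\<in>(\<lambda>p. p ! l) ` ?supp. c l < a \<and> a \<le> c l + \<Lambda>"
      using box that(1) assms(1) by (auto simp: tuple_box_def)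
  qed
  moreover have "\<forall>p\<in>exp_tuples L P. e p \<noteq> 0 \<longrightarrow> (\<forall>l<L. l \<notin> S \<longrightarrow> p ! l = 1)"
    using box by (simp add: tuple_box_def)
  ultimately show ?thesis unfolding row_admissible_def using assms(1,2) by blast
qed

lemma admissible_encoding_of_finite_sum:
  assumes "finite M"
    and recover: "\<forall>k<K. \<forall>p\<in>exp_tuples L P. F k p = (\<Sum>x\<in>M. d x k * e x p)"
    and admissible: "\<forall>x\<in>M. server_admissible K L P \<Gamma> \<Delta> \<Lambda> (d x) (e x)"
  shows "admissible_encoding K L P \<Gamma> \<Delta> \<Lambda> F (card M)"
proof -
  obtain h where h: "bij_betw h {..<card M} M"
    using ex_bij_betw_nat_finite[OF \<open>finite M\<close>] by (auto simp: atLeast0LessThan)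
  have "mode1_product (card M) (\<lambda>n. e (h n)) (\<lambda>k n. d (h n) k) k p = (\<Sum>x\<in>M. d x k * e x p)"
    for k p unfolding mode1_product_def using sum.reindex_bij_betw[OF h] by simp
  moreover have "h n \<in> M" if "n < card M" for n using h that bij_betwE by blast
  ultimately show ?thesis
    unfolding admissible_encoding_def using recover admissible
    by (intro exI[of _ "\<lambda>k n. d (h n) k"] exI[of _ "\<lambda>n. e (h n)"]) simp
qed

lemma per_user_encoding:
  assumes "0 < \<Delta>" "0 < \<Lambda>" "\<Lambda> dvd P" "\<Gamma> \<le> L"
    and F_sparse: "\<forall>k<K. \<forall>p\<in>exp_tuples L P. card (active_coords p) > \<Gamma> \<longrightarrow> F k p = 0"
  shows "admissible_encoding K L P \<Gamma> \<Delta> \<Lambda> F (K * ((L choose \<Gamma>) * (P div \<Lambda>) ^ \<Gamma>))"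
proof -
  let ?T = "sparse_tuples L P \<Gamma>" and ?key = "cell_key L \<Gamma> \<Lambda>" and ?C = "cell_keys L \<Gamma> (P div \<Lambda>)"
  define d :: "nat \<times> nat set \<times> (nat \<Rightarrow> nat) \<Rightarrow> nat \<Rightarrow> real"
    where "d = (\<lambda>(j, \<kappa>) k. if k = j then 1 else 0)"
  define e :: "nat \<times> nat set \<times> (nat \<Rightarrow> nat) \<Rightarrow> nat list \<Rightarrow> real"
    where "e = (\<lambda>(j, \<kappa>) p. if p \<in> ?T \<and> ?key p = \<kappa> then F j p else 0)"
  have "F k p = (\<Sum>x\<in>{..<K} \<times> ?C. d x k * e x p)" if "k < K" "p \<in> exp_tuples L P" for k p
  proof -
    have "d x k * e x p = (if x = (k, ?key p) then if p \<in> ?T then F k p else 0 else 0)" for x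
      by (cases x) (auto simp: d_def e_def)
    then have "(\<Sum>x\<in>{..<K} \<times> ?C. d x k * e x p) = (if p \<in> ?T then F k p else 0)"
      using that(1) cell_key_in_cell_keys[OF _ assms(4,2,3), of p] finite_cell_keys by simp
    also have "\<dots> = F k p" using F_sparse that by (auto simp: sparse_tuples_def)
    finally show ?thesis by simp
  qed
  moreover have "server_admissible K L P \<Gamma> \<Delta> \<Lambda> (d x) (e x)" if x_in: "x \<in> {..<K} \<times> ?C" for x
  proof -
    obtain j S b where x: "x = (j, S, b)" and S: "S \<subseteq> {..<L}" "card S = \<Gamma>"
      using x_in by (auto simp: cell_keys_def)
    have "{k. k < K \<and> d x k \<noteq> 0} \<subseteq> {j}" by (auto simp: x d_def)
    then have "card {k. k < K \<and> d x k \<noteq> 0} \<le> card {j}" by (intro card_mono) simp_all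
    then have "card {k. k < K \<and> d x k \<noteq> 0} \<le> \<Delta>" using \<open>0 < \<Delta>\<close> by simp
    moreover have "p \<in> tuple_box L S (\<lambda>l. b l * \<Lambda>) \<Lambda>" if "e x p \<noteq> 0" for p
    proof -
      have "p \<in> ?T" "?key p = (S, b)" using that by (auto simp: x e_def split: if_splits)
      then show ?thesis using sparse_tuple_in_cell_box[OF _ assms(4,2)] by blast
    qed
    then have "row_admissible L P \<Gamma> \<Lambda> (e x)"
      by (intro row_admissible_if_support_in_box[OF S(1), where c = "\<lambda>l. b l * \<Lambda>"])
        (simp_all add: S(2))
    ultimately show ?thesis unfolding server_admissible_def ..
  qed
  ultimately have "admissible_encoding K L P \<Gamma> \<Delta> \<Lambda> F (card ({..<K} \<times> ?C))"
    by (intro admissible_encoding_of_finite_sum) (auto simp: finite_cell_keys)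
  then show ?thesis by (simp add: card_cartesian_product card_cell_keys)
qed

lemma per_monomial_encoding:
  assumes "0 < \<Delta>" "\<Delta> dvd K" "0 < \<Lambda>" "\<Gamma> \<le> L"
    and F_sparse: "\<forall>k<K. \<forall>p\<in>exp_tuples L P. card (active_coords p) > \<Gamma> \<longrightarrow> F k p = 0"
  shows "admissible_encoding K L P \<Gamma> \<Delta> \<Lambda> F (K div \<Delta> * card (sparse_tuples L P \<Gamma>))"
proof -
  let ?T = "sparse_tuples L P \<Gamma>"
  define d :: "nat \<times> nat list \<Rightarrow> nat \<Rightarrow> real"
    where "d = (\<lambda>(g, q) k. if k div \<Delta> = g then F k q else 0)"
  define e :: "nat \<times> nat list \<Rightarrow> nat list \<Rightarrow> real"
    where "e = (\<lambda>(g, q) p. if p = q then 1 else 0)"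
  have "F k p = (\<Sum>x\<in>{..<K div \<Delta>} \<times> ?T. d x k * e x p)" if "k < K" "p \<in> exp_tuples L P" for k p
  proof -
    have "k div \<Delta> < K div \<Delta>"
      using that(1) \<open>\<Delta> dvd K\<close> by (auto intro: less_mult_imp_div_less)
    moreover have "d x k * e x p = (if x = (k div \<Delta>, p) then F k p else 0)" for x
      by (cases x) (auto simp: d_def e_def)
    ultimately have "(\<Sum>x\<in>{..<K div \<Delta>} \<times> ?T. d x k * e x p) = (if p \<in> ?T then F k p else 0)"
      using finite_sparse_tuples by simp
    also have "\<dots> = F k p" using F_sparse that by (auto simp: sparse_tuples_def)
    finally show ?thesis by simp
  qed
  moreover have "server_admissible K L P \<Gamma> \<Delta> \<Lambda> (d x) (e x)" if x_in: "x \<in> {..<K div \<Delta>} \<times> ?T" for x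
  proof -
    obtain g q where x: "x = (g, q)" and q: "q \<in> ?T" using x_in by auto
    obtain S b where key: "cell_key L \<Gamma> \<Lambda> q = (S, b)" by fastforce
    have S: "S \<subseteq> {..<L}" "card S = \<Gamma>"
      using cover_set_spec(2,3)[OF q assms(4)] key by (auto simp: cell_key_def)
    have "k \<in> {g * \<Delta>..<g * \<Delta> + \<Delta>}" if "k div \<Delta> = g" for k
      using div_times_less_eq_dividend[of k \<Delta>] dividend_less_div_times[OF \<open>0 < \<Delta>\<close>, of k] that
      by simp
    then have "{k. k < K \<and> d x k \<noteq> 0} \<subseteq> {g * \<Delta>..<g * \<Delta> + \<Delta>}"
      by (auto simp: x d_def split: if_splits)
    then have "card {k. k < K \<and> d x k \<noteq> 0} \<le> card {g * \<Delta>..<g * \<Delta> + \<Delta>}"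
      by (intro card_mono) simp_all
    then have "card {k. k < K \<and> d x k \<noteq> 0} \<le> \<Delta>" by simp
    moreover have "p \<in> tuple_box L S (\<lambda>l. b l * \<Lambda>) \<Lambda>" if "e x p \<noteq> 0" for p
    proof -
      have "p = q" using that by (simp add: x e_def split: if_splits)
      then show ?thesis using sparse_tuple_in_cell_box[OF q assms(4,3) key] by simp
    qed
    then have "row_admissible L P \<Gamma> \<Lambda> (e x)"
      by (intro row_admissible_if_support_in_box[OF S(1), where c = "\<lambda>l. b l * \<Lambda>"])
        (simp_all add: S(2))
    ultimately show ?thesis unfolding server_admissible_def ..
  qed
  ultimately have "admissible_encoding K L P \<Gamma> \<Delta> \<Lambda> F (card ({..<K div \<Delta>} \<times> ?T))"
    by (intro admissible_encoding_of_finite_sum) (auto simp: finite_sparse_tuples)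
  then show ?thesis by (simp add: card_cartesian_product)
qed

theorem theorem1:
  fixes K L \<Gamma> \<Delta> P \<Lambda> :: nat
    and F :: "nat \<Rightarrow> nat list \<Rightarrow> real"
  assumes "0 < K" "0 < L" "0 < \<Gamma>" "0 < \<Delta>" "0 < P" "0 < \<Lambda>"
    and "\<Gamma> \<le> L" "\<Delta> \<le> K" "\<Lambda> \<le> P" "\<Delta> dvd K" "\<Lambda> dvd P"
    and F_sparse: "\<forall>k<K. \<forall>p\<in>exp_tuples L P. card (active_coords p) > \<Gamma> \<longrightarrow> F k p = 0"
  shows "\<exists>(N::nat) (D :: nat \<Rightarrow> nat \<Rightarrow> real) (E :: nat \<Rightarrow> nat list \<Rightarrow> real).
     real N \<le> real K / real \<Delta> * real (L choose \<Gamma>) * real (min \<Delta> (\<Lambda> ^ \<Gamma>))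
                 * (real P / real \<Lambda>) ^ \<Gamma>
   \<and> (\<forall>k<K. \<forall>p\<in>exp_tuples L P. F k p = mode1_product N E D k p)
   \<and> (\<forall>n<N.
        card {k. k < K \<and> D k n \<noteq> 0} \<le> \<Delta>
      \<and> (\<exists>S \<subseteq> {..<L}. card S \<le> \<Gamma>
           \<and> (\<forall>p\<in>exp_tuples L P. E n p \<noteq> 0 \<longrightarrow> (\<forall>l<L. l \<notin> S \<longrightarrow> p ! l = 1))
           \<and> (\<forall>l\<in>S. support_row L P E n \<noteq> {} \<longrightarrow>
                 Max ((\<lambda>p. p ! l) ` support_row L P E n)
                 - Min ((\<lambda>p. p ! l) ` support_row L P E n) + 1 \<le> \<Lambda>)))"
proof -
  let ?B = "real K / real \<Delta> * real (L choose \<Gamma>) * real (min \<Delta> (\<Lambda> ^ \<Gamma>)) * (real P / real \<Lambda>) ^ \<Gamma>"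
  have div_K: "real (K div \<Delta>) = real K / real \<Delta>" and div_P: "real (P div \<Lambda>) = real P / real \<Lambda>"
    using \<open>\<Delta> dvd K\<close> \<open>\<Lambda> dvd P\<close> by (simp_all add: real_of_nat_div)
  have "\<exists>N. real N \<le> ?B \<and> admissible_encoding K L P \<Gamma> \<Delta> \<Lambda> F N"
  proof (cases "\<Delta> \<le> \<Lambda> ^ \<Gamma>")
    case True
    have "real (K * ((L choose \<Gamma>) * (P div \<Lambda>) ^ \<Gamma>)) = ?B"
      using True \<open>0 < \<Delta>\<close> by (simp add: div_P min_def)
    then show ?thesis
      using per_user_encoding[OF \<open>0 < \<Delta>\<close> \<open>0 < \<Lambda>\<close> \<open>\<Lambda> dvd P\<close> \<open>\<Gamma> \<le> L\<close> F_sparse] by force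
  next
    case False
    have "real (K div \<Delta> * card (sparse_tuples L P \<Gamma>)) \<le> real (K div \<Delta> * ((L choose \<Gamma>) * P ^ \<Gamma>))"
      using card_sparse_tuples_le[OF \<open>\<Gamma> \<le> L\<close>, of P] by (intro of_nat_mono mult_le_mono2)
    also have "\<dots> = ?B"
      using False \<open>0 < \<Lambda>\<close> by (simp add: div_K min_def power_divide)
    finally show ?thesis
      using per_monomial_encoding[OF \<open>0 < \<Delta>\<close> \<open>\<Delta> dvd K\<close> \<open>0 < \<Lambda>\<close> \<open>\<Gamma> \<le> L\<close> F_sparse] by blast
  qed
  then show ?thesis
    unfolding admissible_encoding_def server_admissible_def row_admissible_def support_row_def
    by blast
qed

end
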